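(* Let $M$ be a positive integer. Then for each $n\in\{1,\dots,M\}$, $$\operatorname{diag}\Big(\Big(\tfrac{T_i}{T_i-nT/M}\Big)^{\kappa_i}\Big)Z_{nT/M}=\operatorname{diag}\Big(\Big(\tfrac{T_i}{T_i-(n-1)T/M}\Big)^{\kappa_i}\Big)Z_{(n-1)T/M}+\operatorname{diag}(\phi_{n,i})\,m+\varepsilon_{n,Z},$$ where, for $i\in\{1,\dots,N\}$, $$\phi_{n,i}:=\begin{cases}\dfrac{T_i^{\kappa_i}}{\kappa_i-1}\Big(\big(T_i-\tfrac{nT}{M}\big)^{1-\kappa_i}-\big(T_i-\tfrac{(n-1)T}{M}\big)^{1-\kappa_i}\Big),&\kappa_i\in(0,1)\cup(1,\infty),\\[1ex] T_i\ln\Big(\dfrac{T_i-(n-1)T/M}{T_i-nT/M}\Big),&\kappa_i=1,\end{cases}$$ and $\varepsilon_{1,Z},\dots,\varepsilon_{M,Z}$ are independent Gaussian random vectors with zero mean and covariance matrix $\mathbb E(\varepsilon_{n,Z}\varepsilon_{n,Z}^\top)=[c_{ij;n}]_{N\times N}$, where $$c_{ij;n}:=\beta_{ij}\int_{(n-1)T/M}^{nT/M}\Big(\frac{T_i}{T_i-s}\Big)^{\kappa_i}\Big(\frac{T_j}{T_j-s}\Big)^{\kappa_j}ds,$$ and $\beta_{ij}$ is the $(i,j)$ entry of $\Sigma_Z:=\tilde\Sigma_Z\tilde\Sigma_Z^\top=\Sigma_F+\Sigma_S-\Sigma_{FS}-\Sigma_{FS}^\top$.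
   Context: Market model: $N\ge1$ is an integer, $r\ge0$ a constant interest rate, $T>0$ the trading horizon, and $T_1,\dots,T_N$ futures maturities with $T<T_i$ for all $i$. On a filtered probability space with Brownian filtration satisfying the usual conditions, $W_t=(W_{t,1},\dots,W_{t,2N})^\top$ is a standard $2N$-dimensional Brownian motion. Let $\tilde\Sigma=[\tilde\sigma_{ij}]$ be a real $2N\times2N$ lower triangular matrix ($\tilde\sigma_{ij}=0$ for $j>i$) and $\Sigma:=\tilde\Sigma\tilde\Sigma^\top=\begin{pmatrix}\Sigma_F&\Sigma_{FS}\\ \Sigma_{FS}^\top&\Sigma_S\end{pmatrix}$ ($N\times N$ blocks), assumed positive definite; $\sigma_{i,F}:=\sqrt{\Sigma_{ii}}$, $\sigma_{i,S}:=\sqrt{\Sigma_{N+i,N+i}}$. Constants $\mu_{i,F},\mu_{i,S},\eta_{i,F},\eta_{i,S}$ satisfy $\eta_{i,F}<\eta_{i,S}$. Futures prices $F_{t,i}$ and spot prices $S_{t,i}$ satisfy $dF_{t,i}=F_{t,i}\big[(\mu_{i,F}+\tfrac{\eta_{i,F}}{T_i-t}Z_{t,i})dt+\sum_{j=1}^{i}\tilde\sigma_{i,j}dW_{t,j}\big]$, $dS_{t,i}=S_{t,i}\big[(\mu_{i,S}+\tfrac{\eta_{i,S}}{T_i-t}Z_{t,i})dt+\sum_{j=1}^{N+i}\tilde\sigma_{N+i,j}dW_{t,j}\big]$, where $Z_{t,i}:=\log(F_{t,i}/S_{t,i})-r(T_i-t)$ and $Z_t=(Z_{t,1},\dots,Z_{t,N})^\top$,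 $0\le t\le T$. Equivalently $Z$ is the unique solution of $dZ_t=(m-K(t)Z_t)dt+\tilde\Sigma_ZdW_t$, where $\tilde\Sigma_Z:=[I_N,-I_N]\tilde\Sigma$, $m=(m_i)$ with $m_i=r+\mu_{i,F}-\mu_{i,S}-\frac12(\sigma_{i,F}^2-\sigma_{i,S}^2)$, $\kappa_i:=\eta_{i,S}-\eta_{i,F}>0$, $K(t)=\operatorname{diag}(\kappa_i/(T_i-t))$. For a vector $(a_1,\dots,a_N)$, $\operatorname{diag}(a_i)$ denotes the diagonal matrix with these entries. *)

theory Defs
  imports "HOL-Probability.Probability"
begin

(* Vectors in R^d are represented as functions nat => real, with coordinates 1..d. *)

text \<open>Gaussian random vector (coordinates in I) with mean mu and covariance C,
  characterised by its characteristic function (this covers degenerate cases).\<close>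
definition gaussian_vec ::
  "'a measure \<Rightarrow> nat set \<Rightarrow> ('a \<Rightarrow> nat \<Rightarrow> real) \<Rightarrow> (nat \<Rightarrow> real) \<Rightarrow> (nat \<Rightarrow> nat \<Rightarrow> real) \<Rightarrow> bool"
  where "gaussian_vec P I X mu C \<longleftrightarrow>
    (\<forall>i\<in>I. (\<lambda>\<omega>. X \<omega> i) \<in> borel_measurable P) \<and>
    (\<forall>u::nat \<Rightarrow> real.
       (\<integral>\<omega>. cis (\<Sum>i\<in>I. u i * X \<omega> i) \<partial>P)
         = cis (\<Sum>i\<in>I. u i * mu i)
           * complex_of_real (exp (- (\<Sum>i\<in>I. \<Sum>j\<in>I. u i * C i j * u j) / 2)))"

definition std_brownian :: "'a measure \<Rightarrow> nat \<Rightarrow> (real \<Rightarrow> 'a \<Rightarrow> nat \<Rightarrow> real) \<Rightarrow> bool"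
  where "std_brownian P d W \<longleftrightarrow>
    (\<forall>t\<ge>0. \<forall>j\<in>{1..d}. (\<lambda>\<omega>. W t \<omega> j) \<in> borel_measurable P) \<and>
    (\<forall>\<omega>\<in>space P. \<forall>j\<in>{1..d}. W 0 \<omega> j = 0 \<and> continuous_on {0..} (\<lambda>t. W t \<omega> j)) \<and>
    (\<forall>ts::real list. sorted ts \<and> (\<forall>t\<in>set ts. 0 \<le> t) \<longrightarrow>
       prob_space.indep_vars P (\<lambda>_. PiM {1..d} (\<lambda>_. borel))
         (\<lambda>l \<omega>. restrict (\<lambda>j. W (ts ! Suc l) \<omega> j - W (ts ! l) \<omega> j) {1..d})
         {..<length ts - 1}) \<and>
    (\<forall>s t. 0 \<le> s \<and> s \<le> t \<longrightarrow>
       gaussian_vec P {1..d} (\<lambda>\<omega> j. W t \<omega> j - W s \<omega> j) (\<lambda>_. 0)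
         (\<lambda>i j. if i = j then t - s else 0))"

text \<open>Sigma = St St^T (2N x 2N), St the lower triangular matrix tilde Sigma.\<close>
definition Sigma :: "nat \<Rightarrow> (nat \<Rightarrow> nat \<Rightarrow> real) \<Rightarrow> nat \<Rightarrow> nat \<Rightarrow> real"
  where "Sigma N St i j = (\<Sum>k=1..2*N. St i k * St j k)"

text \<open>tilde Sigma_Z = [I_N, -I_N] tilde Sigma  (N x 2N).\<close>
definition SigmaZt :: "nat \<Rightarrow> (nat \<Rightarrow> nat \<Rightarrow> real) \<Rightarrow> nat \<Rightarrow> nat \<Rightarrow> real"
  where "SigmaZt N St i j = St i j - St (N + i) j"

definition betaZ :: "nat \<Rightarrow> (nat \<Rightarrow> nat \<Rightarrow> real) \<Rightarrow> nat \<Rightarrow> nat \<Rightarrow> real"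
  where "betaZ N St i j = (\<Sum>k=1..2*N. SigmaZt N St i k * SigmaZt N St j k)"

definition drift_m :: "nat \<Rightarrow> real \<Rightarrow> (nat \<Rightarrow> nat \<Rightarrow> real) \<Rightarrow> (nat \<Rightarrow> real) \<Rightarrow> (nat \<Rightarrow> real) \<Rightarrow> nat \<Rightarrow> real"
  where "drift_m N r St muF muS i =
     r + muF i - muS i - ((sqrt (Sigma N St i i))\<^sup>2 - (sqrt (Sigma N St (N + i) (N + i)))\<^sup>2) / 2"

definition kappa :: "(nat \<Rightarrow> real) \<Rightarrow> (nat \<Rightarrow> real) \<Rightarrow> nat \<Rightarrow> real"
  where "kappa etaF etaS i = etaS i - etaF i"

definition phi :: "real \<Rightarrow> nat \<Rightarrow> (nat \<Rightarrow> real) \<Rightarrow> (nat \<Rightarrow> real) \<Rightarrow> nat \<Rightarrow> nat \<Rightarrow> real"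
  where "phi T M Tm k n i =
    (if k i = 1
     then Tm i * ln ((Tm i - (real n - 1) * T / real M) / (Tm i - real n * T / real M))
     else Tm i powr k i / (k i - 1) *
            ((Tm i - real n * T / real M) powr (1 - k i)
             - (Tm i - (real n - 1) * T / real M) powr (1 - k i)))"

definition covc :: "real \<Rightarrow> nat \<Rightarrow> (nat \<Rightarrow> real) \<Rightarrow> (nat \<Rightarrow> real) \<Rightarrow> (nat \<Rightarrow> nat \<Rightarrow> real)
                    \<Rightarrow> nat \<Rightarrow> nat \<Rightarrow> nat \<Rightarrow> real"
  where "covc T M Tm k \<beta> n i j =
    \<beta> i j * integral {(real n - 1) * T / real M .. real n * T / real M}
       (\<lambda>s. (Tm i / (Tm i - s)) powr k i * (Tm j / (Tm j - s)) powr k j)"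

definition epsZ :: "real \<Rightarrow> nat \<Rightarrow> (nat \<Rightarrow> real) \<Rightarrow> (nat \<Rightarrow> real) \<Rightarrow> (nat \<Rightarrow> real)
                    \<Rightarrow> (real \<Rightarrow> 'a \<Rightarrow> nat \<Rightarrow> real) \<Rightarrow> nat \<Rightarrow> 'a \<Rightarrow> nat \<Rightarrow> real"
  where "epsZ T M Tm k m Z n \<omega> i =
    (Tm i / (Tm i - real n * T / real M)) powr k i * Z (real n * T / real M) \<omega> i
    - (Tm i / (Tm i - (real n - 1) * T / real M)) powr k i * Z ((real n - 1) * T / real M) \<omega> i
    - phi T M Tm k n i * m i"

end

theory Submission
  imports Defs
begin

text \<open>Multiplying by the integrating factor g_i(t) = (T_i/(T_i - t))^\<kappa>_i turns the equation for
  Z_i into d(g_i Z_i) = g_i m_i dt + g_i dY_i with Y = tilde Sigma_Z W. Hence the residual over the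
  n-th period [a, b] is the Wiener integral of g_i against Y_i, which integration by parts writes
  pathwise as g_i(b) Y_i(b) - g_i(a) Y_i(a) - int_a^b g_i' Y_i; this is the pathwise limit of the
  left-point Riemann-Stieltjes sums over dyadic refinements of [a, b]. Each such sum is a linear
  combination of independent Gaussian increments of W, hence Gaussian with covariance beta_ij times
  a Riemann sum of g_i g_j, and convergence of the characteristic functions gives the covariance
  c_ij;n. The sums for different periods depend on the increments inside their own period only;
  these generate independent sigma-algebras at every dyadic level, and the levels are nested, so
  independence passes to the limits.\<close>

section \<open>Dyadic Riemann and Riemann-Stieltjes sums\<close>

definition dyadic_node :: "real \<Rightarrow> real \<Rightarrow> nat \<Rightarrow> nat \<Rightarrow> real" where
  "dyadic_node a b k l = a + real l * ((b - a) / 2 ^ k)"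

lemma dyadic_node_0 [simp]: "dyadic_node a b k 0 = a"
  by (simp add: dyadic_node_def)

lemma dyadic_node_last [simp]: "dyadic_node a b k (2 ^ k) = b"
  by (simp add: dyadic_node_def)

lemma dyadic_node_Suc: "dyadic_node a b k (Suc l) = dyadic_node a b k l + (b - a) / 2 ^ k"
  unfolding dyadic_node_def by (simp add: distrib_right add_divide_distrib)

lemma dyadic_node_mono: "a \<le> b \<Longrightarrow> l \<le> l' \<Longrightarrow> dyadic_node a b k l \<le> dyadic_node a b k l'"
  unfolding dyadic_node_def by (intro add_left_mono mult_right_mono) auto

lemma dyadic_node_mem: "a \<le> b \<Longrightarrow> l \<le> 2 ^ k \<Longrightarrow> dyadic_node a b k l \<in> {a..b}"
  using dyadic_node_mono[of a b 0 l k] dyadic_node_mono[of a b l "2 ^ k" k] by simp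

lemma dyadic_cell_subset:
  "a \<le> b \<Longrightarrow> l < 2 ^ k \<Longrightarrow> {dyadic_node a b k l..dyadic_node a b k (Suc l)} \<subseteq> {a..b}"
  using dyadic_node_mem[of a b l k] dyadic_node_mem[of a b "Suc l" k] by auto

lemma integral_sum_dyadic_cells:
  fixes F :: "real \<Rightarrow> real"
  assumes "a \<le> b" and "continuous_on {a..b} F"
  shows "integral {a..b} F = (\<Sum>l<2 ^ k. integral {dyadic_node a b k l..dyadic_node a b k (Suc l)} F)"
proof -
  have "integral {a..dyadic_node a b k m} F
          = (\<Sum>l<m. integral {dyadic_node a b k l..dyadic_node a b k (Suc l)} F)"
    if "m \<le> 2 ^ k" for m
    using that
  proof (induction m)
    case (Suc m)
    have "integral {a..dyadic_node a b k m} F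
            + integral {dyadic_node a b k m..dyadic_node a b k (Suc m)} F
          = integral {a..dyadic_node a b k (Suc m)} F"
    proof (rule Henstock_Kurzweil_Integration.integral_combine)
      show "a \<le> dyadic_node a b k m"
        using dyadic_node_mono[OF assms(1), of 0 m k] by simp
      show "dyadic_node a b k m \<le> dyadic_node a b k (Suc m)"
        using dyadic_node_mono[OF assms(1), of m "Suc m" k] by simp
      show "F integrable_on {a..dyadic_node a b k (Suc m)}"
        using Suc.prems assms dyadic_node_mem[of a b "Suc m" k]
        by (intro integrable_continuous_real continuous_on_subset[OF assms(2)]) auto
    qed
    then show ?case using Suc by simp
  qed simp
  from this[of "2 ^ k"] show ?thesis by simp
qed

text \<open>The tag of the l-th cell is its left (\<theta> = 0) or right (\<theta> = 1) endpoint.\<close>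

lemma dyadic_cell_oscillation_bound:
  fixes F G :: "real \<Rightarrow> real" and \<theta> :: nat
  assumes ab: "a < b" and F: "continuous_on {a..b} F" and G: "continuous_on {a..b} G"
    and \<theta>: "\<theta> \<le> 1" and l: "l < 2 ^ k"
    and G_bound: "\<And>s. s \<in> {a..b} \<Longrightarrow> \<bar>G s\<bar> \<le> B"
    and F_close: "\<And>x x'. x \<in> {a..b} \<Longrightarrow> x' \<in> {a..b} \<Longrightarrow> \<bar>x' - x\<bar> \<le> (b - a) / 2 ^ k \<Longrightarrow>
      \<bar>F x' - F x\<bar> \<le> \<epsilon>"
  shows "\<bar>integral {dyadic_node a b k l..dyadic_node a b k (Suc l)}
            (\<lambda>s. G s * (F s - F (dyadic_node a b k (l + \<theta>))))\<bar> \<le> B * \<epsilon> * ((b - a) / 2 ^ k)"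
proof -
  let ?x = "dyadic_node a b k"
  have cell: "{?x l..?x (Suc l)} \<subseteq> {a..b}"
    using dyadic_cell_subset[of a b l k] ab l by auto
  have "norm (integral {?x l..?x (Suc l)} (\<lambda>s. G s * (F s - F (?x (l + \<theta>)))))
          \<le> B * \<epsilon> * (?x (Suc l) - ?x l)"
  proof (rule integral_bound)
    show "?x l \<le> ?x (Suc l)"
      using ab by (simp add: dyadic_node_Suc)
    show "continuous_on {?x l..?x (Suc l)} (\<lambda>s. G s * (F s - F (?x (l + \<theta>))))"
      using cell by (intro continuous_intros continuous_on_subset[OF G] continuous_on_subset[OF F])
  next
    fix t
    assume t: "t \<in> {?x l..?x (Suc l)}"
    have "\<bar>t - ?x (l + \<theta>)\<bar> \<le> (b - a) / 2 ^ k"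
      using t \<theta> by (cases \<theta>) (auto simp: dyadic_node_Suc)
    moreover have "?x (l + \<theta>) \<in> {a..b}"
      using ab l \<theta> by (intro dyadic_node_mem) auto
    ultimately have "\<bar>F t - F (?x (l + \<theta>))\<bar> \<le> \<epsilon>"
      using F_close t cell by auto
    then show "norm (G t * (F t - F (?x (l + \<theta>)))) \<le> B * \<epsilon>"
      using G_bound[of t] t cell by (auto simp: abs_mult intro: mult_mono')
  qed
  then show ?thesis
    by (simp add: dyadic_node_Suc)
qed

lemma dyadic_oscillation_tendsto_0:
  fixes F G :: "real \<Rightarrow> real" and \<theta> :: nat
  assumes ab: "a < b" and F: "continuous_on {a..b} F" and G: "continuous_on {a..b} G"
    and \<theta>: "\<theta> \<le> 1"
  shows "(\<lambda>k. \<Sum>l<2 ^ k. integral {dyadic_node a b k l..dyadic_node a b k (Suc l)}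
            (\<lambda>s. G s * (F s - F (dyadic_node a b k (l + \<theta>))))) \<longlonglongrightarrow> 0"
proof (rule LIMSEQ_I)
  fix e :: real
  assume e: "e > 0"
  obtain B where B: "B > 0" "\<And>s. s \<in> {a..b} \<Longrightarrow> \<bar>G s\<bar> \<le> B"
    using compact_continuous_image[OF G compact_Icc]
    by (metis compact_imp_bounded bounded_pos imageI real_norm_def)
  define e' where "e' = e / (2 * B * (b - a))"
  have "e' > 0"
    using e B ab by (simp add: e'_def)
  then obtain d where d: "d > 0"
    and F_close: "\<And>x x'. x \<in> {a..b} \<Longrightarrow> x' \<in> {a..b} \<Longrightarrow> dist x' x < d \<Longrightarrow> dist (F x') (F x) < e'"
    using compact_uniformly_continuous[OF F compact_Icc] unfolding uniformly_continuous_on_def by metis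
  have "(\<lambda>k. (b - a) / 2 ^ k) \<longlonglongrightarrow> 0"
    by (intro LIMSEQ_divide_realpow_zero) auto
  then obtain k0 where k0: "(b - a) / 2 ^ k0 < d"
    using d ab LIMSEQ_D[of _ 0 d] by (fastforce simp: abs_of_pos)
  show "\<exists>k0. \<forall>k\<ge>k0. norm ((\<Sum>l<2 ^ k. integral {dyadic_node a b k l..dyadic_node a b k (Suc l)}
            (\<lambda>s. G s * (F s - F (dyadic_node a b k (l + \<theta>))))) - 0) < e"
  proof (intro exI allI impI)
    fix k :: nat
    assume "k \<ge> k0"
    let ?x = "dyadic_node a b k" and ?h = "(b - a) / 2 ^ k"
    have "?h \<le> (b - a) / 2 ^ k0"
      using ab \<open>k \<ge> k0\<close> by (intro divide_left_mono) (auto simp: power_increasing)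
    with k0 have "\<bar>F x' - F x\<bar> \<le> e'"
      if "x \<in> {a..b}" "x' \<in> {a..b}" "\<bar>x' - x\<bar> \<le> ?h" for x x'
      using F_close[OF that(1,2)] that(3) by (simp add: dist_real_def less_imp_le)
    then have "\<bar>integral {?x l..?x (Suc l)} (\<lambda>s. G s * (F s - F (?x (l + \<theta>))))\<bar> \<le> B * e' * ?h"
      if "l < 2 ^ k" for l
      using that B(2) by (intro dyadic_cell_oscillation_bound[OF ab F G \<theta>])
    then have "\<bar>\<Sum>l<2 ^ k. integral {?x l..?x (Suc l)} (\<lambda>s. G s * (F s - F (?x (l + \<theta>))))\<bar>
            \<le> (\<Sum>l<(2::nat) ^ k. B * e' * ?h)"
      by (intro order_trans[OF sum_abs sum_mono]) auto
    also have "\<dots> = B * e' * (b - a)"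
      by simp
    also have "\<dots> < e"
      using B ab e unfolding e'_def by (simp add: field_simps)
    finally show "norm ((\<Sum>l<2 ^ k. integral {?x l..?x (Suc l)}
            (\<lambda>s. G s * (F s - F (?x (l + \<theta>))))) - 0) < e"
      by simp
  qed
qed

lemma dyadic_riemann_sum_tendsto:
  fixes F :: "real \<Rightarrow> real"
  assumes ab: "a < b" and F: "continuous_on {a..b} F"
  shows "(\<lambda>k. \<Sum>l<2 ^ k. (b - a) / 2 ^ k * F (dyadic_node a b k l)) \<longlonglongrightarrow> integral {a..b} F"
proof -
  let ?x = "dyadic_node a b" and ?h = "\<lambda>k::nat. (b - a) / 2 ^ k"
  have cell: "integral {?x k l..?x k (Suc l)} (\<lambda>s. 1 * (F s - F (?x k (l + 0))))
      = integral {?x k l..?x k (Suc l)} F - ?h k * F (?x k l)"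
    if "l < 2 ^ k" for k l
  proof -
    have "F integrable_on {?x k l..?x k (Suc l)}"
      using dyadic_cell_subset[of a b l k] ab that
      by (intro integrable_continuous_real continuous_on_subset[OF F]) auto
    then have "integral {?x k l..?x k (Suc l)} (\<lambda>s. F s - F (?x k l))
        = integral {?x k l..?x k (Suc l)} F - integral {?x k l..?x k (Suc l)} (\<lambda>s. F (?x k l))"
      by (intro integral_diff integrable_const_ivl)
    then show ?thesis
      using ab by (simp add: dyadic_node_Suc)
  qed
  have "(\<Sum>l<2 ^ k. ?h k * F (?x k l)) = integral {a..b} F
      - (\<Sum>l<2 ^ k. integral {?x k l..?x k (Suc l)} (\<lambda>s. 1 * (F s - F (?x k (l + 0)))))" for k
    using integral_sum_dyadic_cells[of a b F k] ab F cell by (simp add: sum_subtractf)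
  moreover have "(\<lambda>k. integral {a..b} F - (\<Sum>l<2 ^ k. integral {?x k l..?x k (Suc l)}
      (\<lambda>s. 1 * (F s - F (?x k (l + 0)))))) \<longlonglongrightarrow> integral {a..b} F - 0"
    by (intro tendsto_diff tendsto_const dyadic_oscillation_tendsto_0 ab F) auto
  ultimately show ?thesis
    by simp
qed

lemma integral_mult_diff_right_endpoint:
  fixes g g' Y :: "real \<Rightarrow> real"
  assumes uv: "u \<le> v" and Y: "continuous_on {u..v} Y" and g': "continuous_on {u..v} g'"
    and g: "\<And>x. x \<in> {u..v} \<Longrightarrow> (g has_real_derivative g' x) (at x)"
  shows "integral {u..v} (\<lambda>s. g' s * (Y s - Y v))
    = integral {u..v} (\<lambda>s. g' s * Y s) - (g v - g u) * Y v"
proof -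
  have "((\<lambda>s. g' s * Y v) has_integral (g v - g u) * Y v) {u..v}"
    using uv g
    by (intro has_integral_mult_left fundamental_theorem_of_calculus)
       (auto simp: has_real_derivative_iff_has_vector_derivative[symmetric]
             intro: has_field_derivative_at_within)
  moreover have "(\<lambda>s. g' s * Y s) integrable_on {u..v}"
    by (intro integrable_continuous_real continuous_intros g' Y)
  ultimately have "((\<lambda>s. g' s * (Y s - Y v)) has_integral
      integral {u..v} (\<lambda>s. g' s * Y s) - (g v - g u) * Y v) {u..v}"
    unfolding right_diff_distrib by (intro has_integral_diff integrable_integral)
  then show ?thesis
    by (rule integral_unique)
qed

text \<open>Summation by parts: the Riemann-Stieltjes sum is g b Y b - g a Y a minus the sum of
  (g x_(l+1) - g x_l) Y x_(l+1), i.e. minus a right-tagged Riemann sum of g' Y.\<close>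

lemma dyadic_stieltjes_sum_eq:
  fixes g g' Y :: "real \<Rightarrow> real"
  assumes ab: "a < b" and Y: "continuous_on {a..b} Y" and g': "continuous_on {a..b} g'"
    and g: "\<And>x. x \<in> {a..b} \<Longrightarrow> (g has_real_derivative g' x) (at x)"
  shows "(\<Sum>l<2 ^ k. g (dyadic_node a b k l) * (Y (dyadic_node a b k (Suc l)) - Y (dyadic_node a b k l)))
    = g b * Y b - g a * Y a - integral {a..b} (\<lambda>s. g' s * Y s)
      + (\<Sum>l<2 ^ k. integral {dyadic_node a b k l..dyadic_node a b k (Suc l)}
           (\<lambda>s. g' s * (Y s - Y (dyadic_node a b k (l + 1)))))"
proof -
  let ?x = "dyadic_node a b k"
  have "integral {?x l..?x (Suc l)} (\<lambda>s. g' s * (Y s - Y (?x (l + 1))))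
      = integral {?x l..?x (Suc l)} (\<lambda>s. g' s * Y s) - (g (?x (Suc l)) - g (?x l)) * Y (?x (Suc l))"
    if "l < 2 ^ k" for l
    using dyadic_cell_subset[of a b l k] ab that
    by (simp, intro integral_mult_diff_right_endpoint continuous_on_subset[OF Y]
        continuous_on_subset[OF g'] g) (auto simp: dyadic_node_Suc)
  then have "(\<Sum>l<2 ^ k. integral {?x l..?x (Suc l)} (\<lambda>s. g' s * (Y s - Y (?x (l + 1)))))
      = integral {a..b} (\<lambda>s. g' s * Y s) - (\<Sum>l<2 ^ k. (g (?x (Suc l)) - g (?x l)) * Y (?x (Suc l)))"
    using integral_sum_dyadic_cells[of a b "\<lambda>s. g' s * Y s" k] ab
    by (simp add: sum_subtractf continuous_intros Y g')
  moreover have "(\<Sum>l<2 ^ k. g (?x l) * (Y (?x (Suc l)) - Y (?x l)))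
      = (\<Sum>l<2 ^ k. g (?x (Suc l)) * Y (?x (Suc l)) - g (?x l) * Y (?x l))
        - (\<Sum>l<2 ^ k. (g (?x (Suc l)) - g (?x l)) * Y (?x (Suc l)))"
    by (simp add: sum_subtractf[symmetric] algebra_simps)
  moreover have "(\<Sum>l<2 ^ k. g (?x (Suc l)) * Y (?x (Suc l)) - g (?x l) * Y (?x l))
      = g b * Y b - g a * Y a"
    using sum_lessThan_telescope[of "\<lambda>l. g (?x l) * Y (?x l)" "2 ^ k"] by simp
  ultimately show ?thesis
    by simp
qed

lemma dyadic_stieltjes_sum_tendsto:
  fixes g g' Y :: "real \<Rightarrow> real"
  assumes ab: "a < b" and Y: "continuous_on {a..b} Y" and g': "continuous_on {a..b} g'"
    and g: "\<And>x. x \<in> {a..b} \<Longrightarrow> (g has_real_derivative g' x) (at x)"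
  shows "(\<lambda>k. \<Sum>l<2 ^ k. g (dyadic_node a b k l)
              * (Y (dyadic_node a b k (Suc l)) - Y (dyadic_node a b k l)))
          \<longlonglongrightarrow> g b * Y b - g a * Y a - integral {a..b} (\<lambda>s. g' s * Y s)"
proof -
  have "(\<Sum>l<2 ^ k. g (dyadic_node a b k l) * (Y (dyadic_node a b k (Suc l)) - Y (dyadic_node a b k l)))
    = g b * Y b - g a * Y a - integral {a..b} (\<lambda>s. g' s * Y s)
      + (\<Sum>l<2 ^ k. integral {dyadic_node a b k l..dyadic_node a b k (Suc l)}
           (\<lambda>s. g' s * (Y s - Y (dyadic_node a b k (l + 1)))))" for k
    by (rule dyadic_stieltjes_sum_eq[OF ab Y g' g])
  moreover have "(\<lambda>k. g b * Y b - g a * Y a - integral {a..b} (\<lambda>s. g' s * Y s)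
      + (\<Sum>l<2 ^ k. integral {dyadic_node a b k l..dyadic_node a b k (Suc l)}
           (\<lambda>s. g' s * (Y s - Y (dyadic_node a b k (l + 1))))))
      \<longlonglongrightarrow> g b * Y b - g a * Y a - integral {a..b} (\<lambda>s. g' s * Y s) + 0"
    by (intro tendsto_add tendsto_const dyadic_oscillation_tendsto_0 ab Y g') auto
  ultimately show ?thesis
    by simp
qed

section \<open>The integrating factor\<close>

definition integrating_factor :: "real \<Rightarrow> real \<Rightarrow> real \<Rightarrow> real" where
  "integrating_factor Tm \<kappa> t = (Tm / (Tm - t)) powr \<kappa>"

definition integrating_factor_integral :: "real \<Rightarrow> real \<Rightarrow> real \<Rightarrow> real \<Rightarrow> real" where
  "integrating_factor_integral Tm \<kappa> a b =
    (if \<kappa> = 1 then Tm * ln ((Tm - a) / (Tm - b))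
     else Tm powr \<kappa> / (\<kappa> - 1) * ((Tm - b) powr (1 - \<kappa>) - (Tm - a) powr (1 - \<kappa>)))"

lemma has_real_derivative_integrating_factor:
  assumes "t < Tm" "0 < Tm"
  shows "(integrating_factor Tm \<kappa> has_real_derivative \<kappa> / (Tm - t) * integrating_factor Tm \<kappa> t) (at t)"
proof -
  have "((\<lambda>t. (Tm / (Tm - t)) powr \<kappa>) has_real_derivative
     (Tm / (Tm - t)) powr \<kappa> * (0 * ln (Tm / (Tm - t)) + (Tm / (Tm - t)^2) * \<kappa> / (Tm / (Tm - t)))) (at t)"
    using assms by (intro DERIV_powr) (auto intro!: derivative_eq_intros simp: power2_eq_square field_simps)
  moreover have "(Tm / (Tm - t)^2) * \<kappa> / (Tm / (Tm - t)) = \<kappa> / (Tm - t)"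
  proof -
    have "(Tm / d^2) * \<kappa> / (Tm / d) = \<kappa> / d" if "d \<noteq> 0" for d :: real
      using assms that by (simp add: power2_eq_square field_simps)
    then show ?thesis
      using assms by simp
  qed
  ultimately show ?thesis
    unfolding integrating_factor_def by (simp add: mult.commute)
qed

lemma continuous_on_integrating_factor:
  assumes "b < Tm" "0 < Tm"
  shows "continuous_on {a..b} (integrating_factor Tm \<kappa>)"
proof (rule DERIV_continuous_on)
  fix x
  assume "x \<in> {a..b}"
  then show "(integrating_factor Tm \<kappa> has_real_derivative \<kappa> / (Tm - x) * integrating_factor Tm \<kappa> x)
      (at x within {a..b})"
    using assms by (intro has_field_derivative_at_within[OF has_real_derivative_integrating_factor]) auto
qed

lemma has_real_derivative_powr_primitive:
  assumes "\<kappa> \<noteq> 1" "x < Tm" "0 < Tm"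
  shows "((\<lambda>t. Tm powr \<kappa> / (\<kappa> - 1) * (Tm - t) powr (1 - \<kappa>))
    has_real_derivative integrating_factor Tm \<kappa> x) (at x)"
proof -
  have pos: "Tm - x > 0"
    using assms by auto
  let ?D = "Tm powr \<kappa> / (\<kappa> - 1) * ((Tm - x) powr (1 - \<kappa>) * (0 * ln (Tm - x) + (-1) * (1 - \<kappa>) / (Tm - x)))"
  have D: "((\<lambda>t. Tm powr \<kappa> / (\<kappa> - 1) * (Tm - t) powr (1 - \<kappa>)) has_real_derivative ?D) (at x)"
    using pos by (intro DERIV_cmult DERIV_powr) (auto intro!: derivative_eq_intros)
  have gen: "C / (\<kappa> - 1) * (Q * (0 * L + (-1) * (1 - \<kappa>) / e)) = C * (Q / e)"
    if "e \<noteq> 0" for C Q L e :: real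
    using assms(1) that by (simp add: field_simps)
  have "?D = Tm powr \<kappa> * ((Tm - x) powr (1 - \<kappa>) / (Tm - x))"
    by (rule gen) (use pos in auto)
  also have "\<dots> = integrating_factor Tm \<kappa> x"
    using pos assms by (simp add: powr_diff integrating_factor_def powr_divide)
  finally show ?thesis
    using D by simp
qed

lemma has_integral_integrating_factor:
  assumes "a \<le> b" "b < Tm" "0 < Tm"
  shows "(integrating_factor Tm \<kappa> has_integral integrating_factor_integral Tm \<kappa> a b) {a..b}"
proof (cases "\<kappa> = 1")
  case True
  let ?A = "\<lambda>t. - Tm * ln (Tm - t)"
  have "(integrating_factor Tm \<kappa> has_integral ?A b - ?A a) {a..b}"
    using assms True
    by (intro fundamental_theorem_of_calculus)
       (auto intro!: derivative_eq_intros simp: integrating_factor_def field_simps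
         has_real_derivative_iff_has_vector_derivative[symmetric])
  moreover have "?A b - ?A a = integrating_factor_integral Tm \<kappa> a b"
    using True assms by (simp add: integrating_factor_integral_def ln_div algebra_simps)
  ultimately show ?thesis
    by simp
next
  case False
  let ?A = "\<lambda>t. Tm powr \<kappa> / (\<kappa> - 1) * (Tm - t) powr (1 - \<kappa>)"
  have "(integrating_factor Tm \<kappa> has_integral ?A b - ?A a) {a..b}"
  proof (rule fundamental_theorem_of_calculus[OF assms(1)])
    fix x
    assume "x \<in> {a..b}"
    then show "(?A has_vector_derivative integrating_factor Tm \<kappa> x) (at x within {a..b})"
      using assms False unfolding has_real_derivative_iff_has_vector_derivative[symmetric]
      by (intro has_field_derivative_at_within[OF has_real_derivative_powr_primitive]) auto
  qed
  moreover have "?A b - ?A a = integrating_factor_integral Tm \<kappa> a b"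
    using False by (simp add: integrating_factor_integral_def algebra_simps)
  ultimately show ?thesis
    by simp
qed

text \<open>For U = Zp - Yp the integral equation gives U' = m - \<kappa>/(Tm - t) Zp, and the integrating
  factor g satisfies g' = \<kappa>/(Tm - t) g, so (g U)' = g m - g' Yp: the unknown Zp drops out.\<close>

lemma has_vector_derivative_integrating_factor_solution:
  fixes Zp Yp :: "real \<Rightarrow> real"
  assumes x: "x \<in> {0..T}" and Tm: "T < Tm"
    and Zp: "continuous_on {0..T} Zp"
    and eq: "\<forall>t\<in>{0..T}. Zp t = Zp 0 + integral {0..t} (\<lambda>s. m - \<kappa> / (Tm - s) * Zp s) + Yp t"
  shows "((\<lambda>t. integrating_factor Tm \<kappa> t * (Zp 0 + integral {0..t} (\<lambda>s. m - \<kappa> / (Tm - s) * Zp s)))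
      has_vector_derivative integrating_factor Tm \<kappa> x * m - \<kappa> / (Tm - x) * integrating_factor Tm \<kappa> x * Yp x)
      (at x within {0..T})"
proof -
  define U where "U t = Zp 0 + integral {0..t} (\<lambda>s. m - \<kappa> / (Tm - s) * Zp s)" for t
  define g where "g = integrating_factor Tm \<kappa>"
  define g' where "g' s = \<kappa> / (Tm - s) * g s" for s
  have "continuous_on {0..T} (\<lambda>s. m - \<kappa> / (Tm - s) * Zp s)"
    using Tm by (intro continuous_intros Zp) auto
  then have "((\<lambda>t. integral {0..t} (\<lambda>s. m - \<kappa> / (Tm - s) * Zp s))
      has_vector_derivative m - \<kappa> / (Tm - x) * Zp x) (at x within {0..T})"
    using x by (intro integral_has_vector_derivative) auto
  then have "(U has_vector_derivative 0 + (m - \<kappa> / (Tm - x) * Zp x)) (at x within {0..T})"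
    unfolding U_def by (intro has_vector_derivative_add has_vector_derivative_const)
  then have dU: "(U has_real_derivative m - \<kappa> / (Tm - x) * Zp x) (at x within {0..T})"
    by (simp add: has_real_derivative_iff_has_vector_derivative)
  have dg: "(g has_real_derivative g' x) (at x within {0..T})"
    unfolding g_def g'_def using x Tm
    by (intro has_field_derivative_at_within[OF has_real_derivative_integrating_factor]) auto
  have "Zp x = U x + Yp x"
    using bspec[OF eq x] unfolding U_def by linarith
  then have "g' x * U x + (m - \<kappa> / (Tm - x) * Zp x) * g x = g x * m - g' x * Yp x"
    unfolding g'_def by (simp add: algebra_simps add_divide_distrib)
  then have "((\<lambda>t. g t * U t) has_vector_derivative g x * m - g' x * Yp x) (at x within {0..T})"
    using DERIV_mult[OF dg dU] by (simp add: has_real_derivative_iff_has_vector_derivative)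
  then show ?thesis
    unfolding U_def g_def g'_def .
qed

lemma integrating_factor_identity:
  fixes Zp Yp :: "real \<Rightarrow> real"
  assumes ab: "0 \<le> a" "a \<le> b" "b \<le> T" "T < Tm"
    and Zp: "continuous_on {0..T} Zp"
    and eq: "\<forall>t\<in>{0..T}. Zp t = Zp 0 + integral {0..t} (\<lambda>s. m - \<kappa> / (Tm - s) * Zp s) + Yp t"
  shows "integrating_factor Tm \<kappa> b * Zp b - integrating_factor Tm \<kappa> a * Zp a
           - integrating_factor_integral Tm \<kappa> a b * m
       = integrating_factor Tm \<kappa> b * Yp b - integrating_factor Tm \<kappa> a * Yp a
           - integral {a..b} (\<lambda>s. \<kappa> / (Tm - s) * integrating_factor Tm \<kappa> s * Yp s)"
proof -
  define U where "U t = Zp 0 + integral {0..t} (\<lambda>s. m - \<kappa> / (Tm - s) * Zp s)" for t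
  define g where "g = integrating_factor Tm \<kappa>"
  define g' where "g' s = \<kappa> / (Tm - s) * g s" for s
  have sub: "{a..b} \<subseteq> {0..T}"
    using ab by auto
  have U: "U t = Zp t - Yp t" if "t \<in> {0..T}" for t
    using bspec[OF eq that] unfolding U_def by linarith
  have "((\<lambda>t. g t * U t) has_vector_derivative g x * m - g' x * Yp x) (at x within {a..b})"
    if "x \<in> {a..b}" for x
    using has_vector_derivative_integrating_factor_solution[OF subsetD[OF sub that] ab(4) Zp eq]
    unfolding U_def g_def g'_def by (rule has_vector_derivative_within_subset[OF _ sub])
  then have gU: "((\<lambda>s. g s * m - g' s * Yp s) has_integral g b * U b - g a * U a) {a..b}"
    by (rule fundamental_theorem_of_calculus[OF ab(2)])
  have gm: "((\<lambda>s. g s * m) has_integral integrating_factor_integral Tm \<kappa> a b * m) {a..b}"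
    unfolding g_def using ab by (intro has_integral_mult_left has_integral_integrating_factor) auto
  have "((\<lambda>s. g' s * Yp s) has_integral
      integrating_factor_integral Tm \<kappa> a b * m - (g b * U b - g a * U a)) {a..b}"
    using has_integral_diff[OF gm gU] by simp
  then have "integral {a..b} (\<lambda>s. g' s * Yp s)
      = integrating_factor_integral Tm \<kappa> a b * m - (g b * U b - g a * U a)"
    by (rule integral_unique)
  moreover have "U b = Zp b - Yp b" "U a = Zp a - Yp a"
    using U ab by auto
  ultimately show ?thesis
    unfolding g_def g'_def by (simp add: algebra_simps)
qed

section \<open>Limits of Gaussian vectors and independence\<close>

lemma cis_sum: "cis (\<Sum>x\<in>A. f x) = (\<Prod>x\<in>A. cis (f x))"
  by (induction A rule: infinite_finite_induct) (auto simp: cis_mult[symmetric])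

lemma borel_measurable_cis [measurable]: "cis \<in> borel_measurable borel"
  by (intro borel_measurable_continuous_onI continuous_on_cis continuous_on_id)

text \<open>The variance of the sum over p and j of v_pj times independent increments, with
  v_pj = sum_i u_i G_ip c_ij, as a quadratic form in u.\<close>

lemma sum_square_sum_expand:
  fixes u :: "'i \<Rightarrow> real" and h :: real and G :: "'i \<Rightarrow> 'p \<Rightarrow> real" and c :: "'i \<Rightarrow> 'j \<Rightarrow> real"
  shows "(\<Sum>p\<in>Q. h * (\<Sum>j\<in>J. (\<Sum>i\<in>I. u i * G i p * c i j)\<^sup>2)) =
     (\<Sum>i\<in>I. \<Sum>i'\<in>I. u i * ((\<Sum>j\<in>J. c i j * c i' j) * (\<Sum>p\<in>Q. h * G i p * G i' p)) * u i')"
proof -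
  let ?F = "\<lambda>p j i i'. h * (u i * G i p * c i j) * (u i' * G i' p * c i' j)"
  have "(\<Sum>p\<in>Q. h * (\<Sum>j\<in>J. (\<Sum>i\<in>I. u i * G i p * c i j)\<^sup>2))
      = (\<Sum>p\<in>Q. \<Sum>j\<in>J. \<Sum>i\<in>I. \<Sum>i'\<in>I. ?F p j i i')"
  proof -
    have "(\<Sum>i\<in>I. f i)\<^sup>2 = (\<Sum>i\<in>I. \<Sum>i'\<in>I. f i * f i')" for f :: "'i \<Rightarrow> real"
      by (simp add: power2_eq_square sum_product)
    then show ?thesis
      by (simp only: sum_distrib_left mult.assoc)
  qed
  also have "\<dots> = (\<Sum>p\<in>Q. \<Sum>i\<in>I. \<Sum>j\<in>J. \<Sum>i'\<in>I. ?F p j i i')"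
    by (rule sum.cong[OF refl], rule sum.swap)
  also have "\<dots> = (\<Sum>p\<in>Q. \<Sum>i\<in>I. \<Sum>i'\<in>I. \<Sum>j\<in>J. ?F p j i i')"
    by (rule sum.cong[OF refl], rule sum.cong[OF refl], rule sum.swap)
  also have "\<dots> = (\<Sum>i\<in>I. \<Sum>p\<in>Q. \<Sum>i'\<in>I. \<Sum>j\<in>J. ?F p j i i')"
    by (rule sum.swap)
  also have "\<dots> = (\<Sum>i\<in>I. \<Sum>i'\<in>I. \<Sum>p\<in>Q. \<Sum>j\<in>J. ?F p j i i')"
    by (rule sum.cong[OF refl], rule sum.swap)
  also have "\<dots> = (\<Sum>i\<in>I. \<Sum>i'\<in>I. \<Sum>p\<in>Q. \<Sum>j\<in>J.
      u i * ((c i j * c i' j) * (h * G i p * G i' p)) * u i')"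
    by (intro sum.cong refl) (simp only: mult_ac)
  also have "\<dots> = (\<Sum>i\<in>I. \<Sum>i'\<in>I. u i * ((\<Sum>j\<in>J. c i j * c i' j) * (\<Sum>p\<in>Q. h * G i p * G i' p)) * u i')"
    by (simp only: sum_product sum_distrib_left sum_distrib_right)
  finally show ?thesis .
qed

lemma (in prob_space) gaussian_vec_LIMSEQ:
  assumes X: "\<And>k. gaussian_vec M I (X k) \<mu> (C k)"
    and X_Y: "\<And>\<omega> i. \<omega> \<in> space M \<Longrightarrow> i \<in> I \<Longrightarrow> (\<lambda>k. X k \<omega> i) \<longlonglongrightarrow> Y \<omega> i"
    and C_C': "\<And>i j. i \<in> I \<Longrightarrow> j \<in> I \<Longrightarrow> (\<lambda>k. C k i j) \<longlonglongrightarrow> C' i j"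
  shows "gaussian_vec M I Y \<mu> C'"
  unfolding gaussian_vec_def
proof (intro conjI ballI allI)
  have X_meas: "(\<lambda>\<omega>. X k \<omega> i) \<in> borel_measurable M" if "i \<in> I" for k i
    using X that unfolding gaussian_vec_def by blast
  show Y_meas: "(\<lambda>\<omega>. Y \<omega> i) \<in> borel_measurable M" if "i \<in> I" for i
    using X_Y that by (intro borel_measurable_LIMSEQ_real[OF _ X_meas])
  fix u :: "nat \<Rightarrow> real"
  let ?\<phi> = "\<lambda>C. cis (\<Sum>i\<in>I. u i * \<mu> i) * complex_of_real (exp (- (\<Sum>i\<in>I. \<Sum>j\<in>I. u i * C i j * u j) / 2))"
  have lim_X: "(\<lambda>k. \<integral>\<omega>. cis (\<Sum>i\<in>I. u i * X k \<omega> i) \<partial>M) \<longlonglongrightarrow> (\<integral>\<omega>. cis (\<Sum>i\<in>I. u i * Y \<omega> i) \<partial>M)"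
  proof (rule integral_dominated_convergence[where w = "\<lambda>_. 1"])
    show "(\<lambda>\<omega>. cis (\<Sum>i\<in>I. u i * Y \<omega> i)) \<in> borel_measurable M"
      using Y_meas by (intro measurable_compose[OF _ borel_measurable_cis] borel_measurable_sum
          borel_measurable_times measurable_const) auto
    show "(\<lambda>\<omega>. cis (\<Sum>i\<in>I. u i * X k \<omega> i)) \<in> borel_measurable M" for k
      using X_meas by (intro measurable_compose[OF _ borel_measurable_cis] borel_measurable_sum
          borel_measurable_times measurable_const) auto
    show "AE \<omega> in M. (\<lambda>k. cis (\<Sum>i\<in>I. u i * X k \<omega> i)) \<longlonglongrightarrow> cis (\<Sum>i\<in>I. u i * Y \<omega> i)"
      using X_Y by (intro AE_I2 tendsto_cis tendsto_sum tendsto_mult tendsto_const) auto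
  qed auto
  have char_X: "(\<lambda>k. \<integral>\<omega>. cis (\<Sum>i\<in>I. u i * X k \<omega> i) \<partial>M) = (\<lambda>k. ?\<phi> (C k))"
    using X unfolding gaussian_vec_def by blast
  have lim_C: "(\<lambda>k. ?\<phi> (C k)) \<longlonglongrightarrow> ?\<phi> C'"
    using C_C' by (intro tendsto_mult tendsto_const tendsto_of_real tendsto_exp tendsto_divide
        tendsto_minus tendsto_sum) auto
  show "(\<integral>\<omega>. cis (\<Sum>i\<in>I. u i * Y \<omega> i) \<partial>M) = ?\<phi> C'"
    using lim_X unfolding char_X by (rule LIMSEQ_unique[OF _ lim_C])
qed

lemma (in prob_space) indep_vars_measurable_sigma:
  assumes indep: "indep_sets (\<lambda>i. sigma_sets (space M) (F i)) I"
    and F: "\<And>i. i \<in> I \<Longrightarrow> F i \<subseteq> events"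
    and X: "\<And>i. i \<in> I \<Longrightarrow> X i \<in> measurable (sigma (space M) (F i)) (N i)"
  shows "indep_vars N X I"
proof -
  have Pow: "F i \<subseteq> Pow (space M)" if "i \<in> I" for i
    using F[OF that] sets.sets_into_space by blast
  have space: "space (sigma (space M) (F i)) = space M"
    and sets: "sets (sigma (space M) (F i)) = sigma_sets (space M) (F i)" if "i \<in> I" for i
    using Pow[OF that] by (simp_all add: space_measure_of sets_measure_of)
  have "measurable (sigma (space M) (F i)) (N i) \<subseteq> measurable M (N i)" if "i \<in> I" for i
    by (rule measurable_mono)
       (simp_all add: space[OF that] sets[OF that] sets.sigma_sets_subset[OF F[OF that]])
  then have "\<forall>i\<in>I. random_variable (N i) (X i)"
    using X by blast
  moreover have "indep_sets (\<lambda>i. {X i -` A \<inter> space M |A. A \<in> sets (N i)}) I"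
  proof (rule indep_sets_mono_sets[OF indep])
    fix i
    assume i: "i \<in> I"
    show "{X i -` A \<inter> space M |A. A \<in> sets (N i)} \<subseteq> sigma_sets (space M) (F i)"
      using measurable_sets[OF X[OF i]] space[OF i] sets[OF i] by auto
  qed
  ultimately show ?thesis
    unfolding indep_vars_def2 by blast
qed

section \<open>Dyadic increments of Brownian motion\<close>

text \<open>The horizon [0, T] is cut into Mn blocks, numbered 1..Mn, the periods of the discretisation;
  at level k every block is refined into 2^k cells.\<close>

locale dyadic_brownian = prob_space P for P :: "'a measure" +
  fixes d :: nat and W :: "real \<Rightarrow> 'a \<Rightarrow> nat \<Rightarrow> real" and T :: real and Mn :: nat
  assumes brownian: "std_brownian P d W" and T_pos: "0 < T" and Mn_pos: "1 \<le> Mn"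
begin

definition node :: "nat \<Rightarrow> nat \<Rightarrow> real" where
  "node k p = real p * T / (real Mn * 2 ^ k)"

definition incr :: "nat \<Rightarrow> nat \<Rightarrow> 'a \<Rightarrow> nat \<Rightarrow> real" where
  "incr k p \<omega> = restrict (\<lambda>j. W (node k (Suc p)) \<omega> j - W (node k p) \<omega> j) {1..d}"

definition block :: "nat \<Rightarrow> nat \<Rightarrow> nat set" where
  "block k n = {(n - 1) * 2 ^ k..<n * 2 ^ k}"

definition block_start :: "nat \<Rightarrow> real" where
  "block_start n = (real n - 1) * T / real Mn"

definition block_end :: "nat \<Rightarrow> real" where
  "block_end n = real n * T / real Mn"

definition incr_events :: "nat \<Rightarrow> nat \<Rightarrow> 'a set set" where
  "incr_events k p = {incr k p -` A \<inter> space P | A. A \<in> sets (PiM {1..d} (\<lambda>_. borel))}"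

definition block_events :: "nat \<Rightarrow> nat \<Rightarrow> 'a set set" where
  "block_events k n = sigma_sets (space P) (\<Union>p\<in>block k n. incr_events k p)"

text \<open>A level-k increment is the sum of two level-(k + 1) increments, so the block events increase
  with k and their union is Int-stable.\<close>

definition dyadic_block_events :: "nat \<Rightarrow> 'a set set" where
  "dyadic_block_events n = (\<Union>k. block_events k n)"

definition block_sum :: "(real \<Rightarrow> real) \<Rightarrow> (nat \<Rightarrow> real) \<Rightarrow> nat \<Rightarrow> nat \<Rightarrow> 'a \<Rightarrow> real" where
  "block_sum g c k n \<omega> = (\<Sum>p\<in>block k n. g (node k p) * (\<Sum>j\<in>{1..d}. c j * incr k p \<omega> j))"

lemma node_nonneg: "0 \<le> node k p"
  using T_pos by (simp add: node_def)

lemma node_mono: "p \<le> q \<Longrightarrow> node k p \<le> node k q"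
  using T_pos Mn_pos by (auto simp: node_def intro!: divide_right_mono mult_right_mono)

lemma node_Suc_diff: "node k (Suc p) - node k p = T / (real Mn * 2 ^ k)"
  unfolding node_def by (simp add: distrib_right add_divide_distrib)

lemma node_double: "node k p = node (Suc k) (2 * p)"
  unfolding node_def by (simp add: field_simps)

lemma node_in_block:
  assumes "1 \<le> n"
  shows "node k ((n - 1) * 2 ^ k + l) = dyadic_node (block_start n) (block_end n) k l"
proof -
  have "real (n - 1) = real n - 1"
    using assms by auto
  then show ?thesis
    unfolding node_def dyadic_node_def block_start_def block_end_def using Mn_pos
    by (simp add: field_simps)
qed

lemma block_start_less_end: "block_start n < block_end n"
  using T_pos Mn_pos by (simp add: block_start_def block_end_def divide_strict_right_mono)

lemma block_subset: "n \<le> Mn \<Longrightarrow> block k n \<subseteq> {..<Mn * 2 ^ k}"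
  unfolding block_def by (auto intro: order.strict_trans2)

lemma sum_block_shift:
  assumes "1 \<le> n"
  shows "(\<Sum>p\<in>block k n. f p) = (\<Sum>l<2 ^ k. f ((n - 1) * 2 ^ k + l))"
proof -
  have "n * 2 ^ k = 2 ^ k + (n - 1) * 2 ^ k"
    using assms by (cases n) auto
  then have "block k n = {0 + (n - 1) * 2 ^ k..<2 ^ k + (n - 1) * 2 ^ k}"
    unfolding block_def by simp
  then have "(\<Sum>p\<in>block k n. f p) = (\<Sum>l\<in>{0..<2 ^ k}. f (l + (n - 1) * 2 ^ k))"
    by (simp only: sum.shift_bounds_nat_ivl)
  then show ?thesis
    by (simp add: atLeast0LessThan add.commute)
qed

lemma W_measurable: "0 \<le> t \<Longrightarrow> j \<in> {1..d} \<Longrightarrow> (\<lambda>\<omega>. W t \<omega> j) \<in> borel_measurable P"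
  using brownian unfolding std_brownian_def by blast

lemma W_continuous: "\<omega> \<in> space P \<Longrightarrow> j \<in> {1..d} \<Longrightarrow> continuous_on {0..} (\<lambda>t. W t \<omega> j)"
  using brownian unfolding std_brownian_def by blast

lemma incr_measurable: "incr k p \<in> measurable P (PiM {1..d} (\<lambda>_. borel))"
  unfolding incr_def by (intro measurable_restrict borel_measurable_diff W_measurable node_nonneg)

lemma indep_vars_incr: "indep_vars (\<lambda>_. PiM {1..d} (\<lambda>_. borel)) (incr k) {..<Mn * 2 ^ k}"
proof -
  define ts where "ts = map (node k) [0..<Mn * 2 ^ k + 1]"
  have "sorted ts"
    unfolding ts_def sorted_map by (auto simp: sorted_wrt_iff_nth_less node_mono simp del: upt_Suc)
  moreover have "\<forall>t\<in>set ts. 0 \<le> t"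
    unfolding ts_def using node_nonneg by auto
  ultimately have "indep_vars (\<lambda>_. PiM {1..d} (\<lambda>_. borel))
      (\<lambda>l \<omega>. restrict (\<lambda>j. W (ts ! Suc l) \<omega> j - W (ts ! l) \<omega> j) {1..d}) {..<length ts - 1}"
    using brownian unfolding std_brownian_def by blast
  moreover have "length ts - 1 = Mn * 2 ^ k"
    unfolding ts_def by simp
  moreover have "(\<lambda>\<omega>. restrict (\<lambda>j. W (ts ! Suc l) \<omega> j - W (ts ! l) \<omega> j) {1..d}) = incr k l"
    if "l < Mn * 2 ^ k" for l
    using that unfolding ts_def incr_def by (auto simp: nth_append simp del: upt_Suc)
  ultimately show ?thesis
    by (subst indep_vars_cong[where J = "{..<Mn * 2 ^ k}" and N' = "\<lambda>_. PiM {1..d} (\<lambda>_. borel)"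
          and Y = "\<lambda>l \<omega>. restrict (\<lambda>j. W (ts ! Suc l) \<omega> j - W (ts ! l) \<omega> j) {1..d}"]) auto
qed

lemma char_fun_incr:
  "(\<integral>\<omega>. cis (\<Sum>j\<in>{1..d}. v j * incr k p \<omega> j) \<partial>P) =
     complex_of_real (exp (- (T / (real Mn * 2 ^ k)) * (\<Sum>j\<in>{1..d}. (v j)\<^sup>2) / 2))"
proof -
  let ?s = "node k p" and ?t = "node k (Suc p)"
  have "gaussian_vec P {1..d} (\<lambda>\<omega> j. W ?t \<omega> j - W ?s \<omega> j) (\<lambda>_. 0)
      (\<lambda>i j. if i = j then ?t - ?s else 0)"
    using brownian node_nonneg node_mono[of p "Suc p" k] unfolding std_brownian_def by auto
  then have "(\<integral>\<omega>. cis (\<Sum>i\<in>{1..d}. v i * (W ?t \<omega> i - W ?s \<omega> i)) \<partial>P)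
     = cis (\<Sum>i\<in>{1..d}. v i * 0) * complex_of_real (exp (- (\<Sum>i\<in>{1..d}. \<Sum>j\<in>{1..d}.
         v i * (if i = j then ?t - ?s else 0) * v j) / 2))"
    unfolding gaussian_vec_def by blast
  moreover have "(\<Sum>i\<in>{1..d}. \<Sum>j\<in>{1..d}. v i * (if i = j then ?t - ?s else 0) * v j)
      = T / (real Mn * 2 ^ k) * (\<Sum>j\<in>{1..d}. (v j)\<^sup>2)"
    by (simp add: node_Suc_diff sum_distrib_left power2_eq_square algebra_simps
        if_distrib[of "\<lambda>x. _ * x"] if_distrib[of "\<lambda>x. x * _"] cong: if_cong)
  moreover have "(\<integral>\<omega>. cis (\<Sum>j\<in>{1..d}. v j * incr k p \<omega> j) \<partial>P)
      = (\<integral>\<omega>. cis (\<Sum>i\<in>{1..d}. v i * (W ?t \<omega> i - W ?s \<omega> i)) \<partial>P)"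
    unfolding incr_def by (intro Bochner_Integration.integral_cong refl arg_cong[where f = cis] sum.cong) auto
  ultimately show ?thesis
    by simp
qed

lemma incr_split: "incr k p \<omega> = restrict (\<lambda>j. incr (Suc k) (2 * p) \<omega> j + incr (Suc k) (2 * p + 1) \<omega> j) {1..d}"
  using node_double[of k p] node_double[of k "Suc p"] unfolding incr_def by (auto simp: fun_eq_iff)

lemma incr_events_subset: "incr_events k p \<subseteq> events"
  unfolding incr_events_def using incr_measurable by auto

lemma incr_events_Pow: "(\<Union>p\<in>B. incr_events k p) \<subseteq> Pow (space P)"
  unfolding incr_events_def by auto

lemma block_events_subset: "block_events k n \<subseteq> events"
  unfolding block_events_def using incr_events_subset by (intro sets.sigma_sets_subset) auto

lemma dyadic_block_events_subset: "dyadic_block_events n \<subseteq> events"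
  unfolding dyadic_block_events_def using block_events_subset by auto

lemma measurable_incr_sigmaI:
  assumes G: "G \<subseteq> Pow (space P)"
    and pre: "\<And>A. A \<in> sets (PiM {1..d} (\<lambda>_. borel)) \<Longrightarrow> incr k p -` A \<inter> space P \<in> sigma_sets (space P) G"
  shows "incr k p \<in> measurable (sigma (space P) G) (PiM {1..d} (\<lambda>_. borel))"
proof (rule measurableI)
  fix \<omega>
  assume "\<omega> \<in> space (sigma (space P) G)"
  then show "incr k p \<omega> \<in> space (PiM {1..d} (\<lambda>_. borel))"
    using G measurable_space[OF incr_measurable] by (simp add: space_measure_of)
next
  fix A :: "(nat \<Rightarrow> real) set"
  assume "A \<in> sets (PiM {1..d} (\<lambda>_. borel))"
  then show "incr k p -` A \<inter> space (sigma (space P) G) \<in> sets (sigma (space P) G)"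
    using pre G by (simp add: space_measure_of sets_measure_of)
qed

lemma disjoint_family_on_block: "disjoint_family_on (block k) {1..Mn}"
  unfolding disjoint_family_on_def
proof (intro ballI impI equalityI subsetI)
  fix n n' p
  assume n: "n \<in> {1..Mn}" "n' \<in> {1..Mn}" "n \<noteq> n'" and "p \<in> block k n \<inter> block k n'"
  then have "(n - 1) * 2 ^ k \<le> p" "p < n * 2 ^ k" "(n' - 1) * 2 ^ k \<le> p" "p < n' * 2 ^ k"
    unfolding block_def by auto
  then have "(n - 1) * 2 ^ k < n' * 2 ^ k" "(n' - 1) * 2 ^ k < n * 2 ^ k"
    by linarith+
  then have "n - 1 < n'" "n' - 1 < n"
    by simp_all
  with n show "p \<in> {}"
    by auto
qed simp

lemma indep_sets_block_events: "indep_sets (block_events k) {1..Mn}"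
  unfolding block_events_def
proof (rule indep_sets_collect_sigma)
  have "indep_sets (incr_events k) {..<Mn * 2 ^ k}"
    using indep_vars_incr[of k] unfolding indep_vars_def2 incr_events_def by blast
  then show "indep_sets (incr_events k) (\<Union>n\<in>{1..Mn}. block k n)"
    by (rule indep_sets_mono_index[rotated]) (use block_subset in fastforce)
next
  show "Int_stable (incr_events k p)" for p
  proof (rule Int_stableI)
    fix a b
    assume "a \<in> incr_events k p" "b \<in> incr_events k p"
    then obtain A B where "A \<in> sets (PiM {1..d} (\<lambda>_. borel))" "B \<in> sets (PiM {1..d} (\<lambda>_. borel))"
      and "a = incr k p -` A \<inter> space P" "b = incr k p -` B \<inter> space P"
      unfolding incr_events_def by blast
    then show "a \<inter> b \<in> incr_events k p"
      unfolding incr_events_def by (intro CollectI exI[of _ "A \<inter> B"]) auto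
  qed
qed (rule disjoint_family_on_block)

lemma block_events_Suc:
  assumes "1 \<le> n"
  shows "block_events k n \<subseteq> block_events (Suc k) n"
proof -
  let ?G = "\<Union>p\<in>block (Suc k) n. incr_events (Suc k) p"
  have incr_Suc: "incr (Suc k) q \<in> measurable (sigma (space P) ?G) (PiM {1..d} (\<lambda>_. borel))"
    if "q \<in> block (Suc k) n" for q
    using that by (intro measurable_incr_sigmaI incr_events_Pow) (auto simp: incr_events_def)
  have "incr_events k p \<subseteq> sigma_sets (space P) ?G" if p: "p \<in> block k n" for p
  proof
    fix E
    assume "E \<in> incr_events k p"
    then obtain A where A: "A \<in> sets (PiM {1..d} (\<lambda>_. borel))" "E = incr k p -` A \<inter> space P"
      unfolding incr_events_def by auto
    have halves: "2 * p \<in> block (Suc k) n" "2 * p + 1 \<in> block (Suc k) n"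
      using p unfolding block_def by auto
    have "(\<lambda>\<omega>. restrict (\<lambda>j. incr (Suc k) (2 * p) \<omega> j + incr (Suc k) (2 * p + 1) \<omega> j) {1..d})
        \<in> measurable (sigma (space P) ?G) (PiM {1..d} (\<lambda>_. borel))"
      using measurable_component_singleton
      by (intro measurable_restrict borel_measurable_add measurable_compose[OF incr_Suc] halves) auto
    moreover have "incr k p
        = (\<lambda>\<omega>. restrict (\<lambda>j. incr (Suc k) (2 * p) \<omega> j + incr (Suc k) (2 * p + 1) \<omega> j) {1..d})"
      by (rule ext) (rule incr_split)
    ultimately have "incr k p \<in> measurable (sigma (space P) ?G) (PiM {1..d} (\<lambda>_. borel))"
      by simp
    from measurable_sets[OF this A(1)] show "E \<in> sigma_sets (space P) ?G"
      using A incr_events_Pow by (simp add: space_measure_of sets_measure_of)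
  qed
  then show ?thesis
    unfolding block_events_def by (intro sigma_sets_mono) auto
qed

lemma block_events_mono: "1 \<le> n \<Longrightarrow> k \<le> k' \<Longrightarrow> block_events k n \<subseteq> block_events k' n"
  using lift_Suc_mono_le[of "\<lambda>k. block_events k n"] block_events_Suc by blast

lemma Int_stable_dyadic_block_events:
  assumes "1 \<le> n"
  shows "Int_stable (dyadic_block_events n)"
proof (rule Int_stableI)
  fix A B
  assume "A \<in> dyadic_block_events n" "B \<in> dyadic_block_events n"
  then obtain k1 k2 where "A \<in> block_events k1 n" "B \<in> block_events k2 n"
    unfolding dyadic_block_events_def by blast
  then have "A \<in> block_events (max k1 k2) n" "B \<in> block_events (max k1 k2) n"
    using block_events_mono[OF assms, of k1 "max k1 k2"] block_events_mono[OF assms, of k2 "max k1 k2"]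
    by auto
  moreover have "block_events (max k1 k2) n
      = sets (sigma (space P) (\<Union>p\<in>block (max k1 k2) n. incr_events (max k1 k2) p))"
    unfolding block_events_def using incr_events_Pow by (simp add: sets_measure_of)
  ultimately have "A \<inter> B \<in> block_events (max k1 k2) n"
    by (metis sets.Int)
  then show "A \<inter> B \<in> dyadic_block_events n"
    unfolding dyadic_block_events_def by blast
qed

lemma indep_sets_dyadic_block_events: "indep_sets dyadic_block_events {1..Mn}"
proof (rule indep_setsI)
  show "dyadic_block_events n \<subseteq> events" for n
    by (rule dyadic_block_events_subset)
next
  fix A J
  assume J: "J \<noteq> {}" "J \<subseteq> {1..Mn}" "finite J" and A: "\<forall>j\<in>J. A j \<in> dyadic_block_events j"
  then have "\<forall>j\<in>J. \<exists>k. A j \<in> block_events k j"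
    unfolding dyadic_block_events_def by blast
  then obtain level where level: "\<forall>j\<in>J. A j \<in> block_events (level j) j"
    by (rule bchoice[elim_format]) blast
  have "\<forall>j\<in>J. A j \<in> block_events (Max (level ` J)) j"
  proof
    fix j
    assume j: "j \<in> J"
    then have "block_events (level j) j \<subseteq> block_events (Max (level ` J)) j"
      using J by (intro block_events_mono) auto
    then show "A j \<in> block_events (Max (level ` J)) j"
      using level j by blast
  qed
  then show "prob (\<Inter>j\<in>J. A j) = (\<Prod>j\<in>J. prob (A j))"
    using indep_setsD[OF indep_sets_block_events J(2,1,3)] by blast
qed

lemma indep_sets_sigma_dyadic_block_events:
  "indep_sets (\<lambda>n. sigma_sets (space P) (dyadic_block_events n)) {1..Mn}"
  using Int_stable_dyadic_block_events
  by (intro indep_sets_sigma[OF indep_sets_dyadic_block_events]) auto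

lemma incr_measurable_dyadic_block_events:
  assumes "p \<in> block k n"
  shows "incr k p \<in> measurable (sigma (space P) (dyadic_block_events n)) (PiM {1..d} (\<lambda>_. borel))"
proof (rule measurable_incr_sigmaI)
  show "dyadic_block_events n \<subseteq> Pow (space P)"
    using dyadic_block_events_subset sets.sets_into_space by blast
  fix A :: "(nat \<Rightarrow> real) set"
  assume "A \<in> sets (PiM {1..d} (\<lambda>_. borel))"
  then have "incr k p -` A \<inter> space P \<in> block_events k n"
    using assms unfolding block_events_def incr_events_def by blast
  then show "incr k p -` A \<inter> space P \<in> sigma_sets (space P) (dyadic_block_events n)"
    unfolding dyadic_block_events_def by blast
qed


lemma block_sum_measurable_dyadic_block_events:
  "block_sum g c k n \<in> borel_measurable (sigma (space P) (dyadic_block_events n))"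
  unfolding block_sum_def
  by (intro borel_measurable_sum borel_measurable_times measurable_const
      measurable_compose[OF incr_measurable_dyadic_block_events measurable_component_singleton]) auto

lemma block_sum_measurable: "block_sum g c k n \<in> borel_measurable P"
  unfolding block_sum_def
  by (intro borel_measurable_sum borel_measurable_times measurable_const
      measurable_compose[OF incr_measurable measurable_component_singleton]) auto

lemma char_fun_sum_incr:
  assumes Q: "Q \<subseteq> {..<Mn * 2 ^ k}"
  shows "(\<integral>\<omega>. cis (\<Sum>p\<in>Q. \<Sum>j\<in>{1..d}. v p j * incr k p \<omega> j) \<partial>P)
    = complex_of_real (exp (- (\<Sum>p\<in>Q. T / (real Mn * 2 ^ k) * (\<Sum>j\<in>{1..d}. (v p j)\<^sup>2)) / 2))"
proof -
  have fin: "finite Q"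
    using Q finite_subset by blast
  have "(\<integral>\<omega>. cis (\<Sum>p\<in>Q. \<Sum>j\<in>{1..d}. v p j * incr k p \<omega> j) \<partial>P)
      = (\<integral>\<omega>. (\<Prod>p\<in>Q. cis (\<Sum>j\<in>{1..d}. v p j * incr k p \<omega> j)) \<partial>P)"
    by (simp add: cis_sum)
  also have "\<dots> = (\<Prod>p\<in>Q. \<integral>\<omega>. cis (\<Sum>j\<in>{1..d}. v p j * incr k p \<omega> j) \<partial>P)"
  proof (rule indep_vars_lebesgue_integral[OF fin])
    have "(\<lambda>x. cis (\<Sum>j\<in>{1..d}. v p j * x j)) \<in> borel_measurable (PiM {1..d} (\<lambda>_. borel))" for p
      by (intro measurable_compose[OF _ borel_measurable_cis] borel_measurable_sum
          borel_measurable_times measurable_const measurable_component_singleton) auto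
    then show "indep_vars (\<lambda>_. borel) (\<lambda>p \<omega>. cis (\<Sum>j\<in>{1..d}. v p j * incr k p \<omega> j)) Q"
      using indep_vars_subset[OF indep_vars_incr Q] by (rule indep_vars_compose2[rotated])
    show "integrable P (\<lambda>\<omega>. cis (\<Sum>j\<in>{1..d}. v p j * incr k p \<omega> j))" for p
      by (rule integrable_const_bound[where B = 1])
         (auto intro!: measurable_compose[OF _ borel_measurable_cis] borel_measurable_sum
           borel_measurable_times measurable_const measurable_compose[OF incr_measurable measurable_component_singleton])
  qed
  also have "\<dots> = (\<Prod>p\<in>Q. complex_of_real (exp (- (T / (real Mn * 2 ^ k)) * (\<Sum>j\<in>{1..d}. (v p j)\<^sup>2) / 2)))"
    by (intro prod.cong refl char_fun_incr)
  also have "\<dots> = complex_of_real (exp (\<Sum>p\<in>Q. - (T / (real Mn * 2 ^ k)) * (\<Sum>j\<in>{1..d}. (v p j)\<^sup>2) / 2))"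
    by (simp add: exp_sum fin)
  also have "(\<Sum>p\<in>Q. - (T / (real Mn * 2 ^ k)) * (\<Sum>j\<in>{1..d}. (v p j)\<^sup>2) / 2)
      = - (\<Sum>p\<in>Q. T / (real Mn * 2 ^ k) * (\<Sum>j\<in>{1..d}. (v p j)\<^sup>2)) / 2"
    by (simp add: sum_divide_distrib sum_negf)
  finally show ?thesis .
qed

lemma gaussian_vec_block_sum:
  assumes n: "n \<le> Mn"
  shows "gaussian_vec P I (\<lambda>\<omega> i. block_sum (g i) (c i) k n \<omega>) (\<lambda>_. 0)
    (\<lambda>i i'. (\<Sum>j\<in>{1..d}. c i j * c i' j)
       * (\<Sum>p\<in>block k n. T / (real Mn * 2 ^ k) * g i (node k p) * g i' (node k p)))"
  unfolding gaussian_vec_def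
proof (intro conjI ballI allI)
  show "(\<lambda>\<omega>. block_sum (g i) (c i) k n \<omega>) \<in> borel_measurable P" for i
    using block_sum_measurable by simp
  fix u :: "nat \<Rightarrow> real"
  define v where "v p j = (\<Sum>i\<in>I. u i * g i (node k p) * c i j)" for p j
  have "(\<Sum>i\<in>I. u i * block_sum (g i) (c i) k n \<omega>)
      = (\<Sum>p\<in>block k n. \<Sum>j\<in>{1..d}. v p j * incr k p \<omega> j)" for \<omega>
    unfolding block_sum_def v_def sum_distrib_left sum_distrib_right
    by (subst sum.swap, rule sum.cong[OF refl], subst sum.swap) (simp add: mult_ac)
  then have "(\<integral>\<omega>. cis (\<Sum>i\<in>I. u i * block_sum (g i) (c i) k n \<omega>) \<partial>P)
      = (\<integral>\<omega>. cis (\<Sum>p\<in>block k n. \<Sum>j\<in>{1..d}. v p j * incr k p \<omega> j) \<partial>P)"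
    by simp
  also have "\<dots> = complex_of_real (exp (- (\<Sum>p\<in>block k n. T / (real Mn * 2 ^ k)
      * (\<Sum>j\<in>{1..d}. (v p j)\<^sup>2)) / 2))"
    by (rule char_fun_sum_incr[OF block_subset[OF n]])
  also have "(\<Sum>p\<in>block k n. T / (real Mn * 2 ^ k) * (\<Sum>j\<in>{1..d}. (v p j)\<^sup>2))
      = (\<Sum>i\<in>I. \<Sum>i'\<in>I. u i * ((\<Sum>j\<in>{1..d}. c i j * c i' j)
           * (\<Sum>p\<in>block k n. T / (real Mn * 2 ^ k) * g i (node k p) * g i' (node k p))) * u i')"
    unfolding v_def by (rule sum_square_sum_expand[where G = "\<lambda>i p. g i (node k p)"])
  finally show "(\<integral>\<omega>. cis (\<Sum>i\<in>I. u i * block_sum (g i) (c i) k n \<omega>) \<partial>P)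
      = cis (\<Sum>i\<in>I. u i * 0) * complex_of_real (exp (- (\<Sum>i\<in>I. \<Sum>j\<in>I. u i *
          ((\<Sum>j'\<in>{1..d}. c i j' * c j j')
            * (\<Sum>p\<in>block k n. T / (real Mn * 2 ^ k) * g i (node k p) * g j (node k p))) * u j) / 2))"
    by simp
qed

lemma block_sum_eq_stieltjes_sum:
  assumes "1 \<le> n"
  shows "block_sum g c k n \<omega> = (\<Sum>l<2 ^ k. g (dyadic_node (block_start n) (block_end n) k l)
     * ((\<Sum>j\<in>{1..d}. c j * W (dyadic_node (block_start n) (block_end n) k (Suc l)) \<omega> j)
        - (\<Sum>j\<in>{1..d}. c j * W (dyadic_node (block_start n) (block_end n) k l) \<omega> j)))"
proof -
  have "block_sum g c k n \<omega> = (\<Sum>l<2 ^ k. g (node k ((n - 1) * 2 ^ k + l))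
      * (\<Sum>j\<in>{1..d}. c j * incr k ((n - 1) * 2 ^ k + l) \<omega> j))"
    unfolding block_sum_def by (rule sum_block_shift[OF assms])
  also have "\<dots> = (\<Sum>l<2 ^ k. g (node k ((n - 1) * 2 ^ k + l))
      * ((\<Sum>j\<in>{1..d}. c j * W (node k ((n - 1) * 2 ^ k + Suc l)) \<omega> j)
         - (\<Sum>j\<in>{1..d}. c j * W (node k ((n - 1) * 2 ^ k + l)) \<omega> j)))"
    unfolding incr_def by (simp add: sum_subtractf[symmetric] right_diff_distrib)
  finally show ?thesis
    unfolding node_in_block[OF assms] .
qed

lemma block_sum_tendsto:
  assumes n: "n \<in> {1..Mn}" and \<omega>: "\<omega> \<in> space P"
    and g': "continuous_on {block_start n..block_end n} g'"
    and g: "\<And>x. x \<in> {block_start n..block_end n} \<Longrightarrow> (g has_real_derivative g' x) (at x)"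
  shows "(\<lambda>k. block_sum g c k n \<omega>) \<longlonglongrightarrow>
     g (block_end n) * (\<Sum>j\<in>{1..d}. c j * W (block_end n) \<omega> j)
     - g (block_start n) * (\<Sum>j\<in>{1..d}. c j * W (block_start n) \<omega> j)
     - integral {block_start n..block_end n} (\<lambda>t. g' t * (\<Sum>j\<in>{1..d}. c j * W t \<omega> j))"
proof -
  have n1: "1 \<le> n"
    using n by simp
  have "0 \<le> block_start n"
    using n T_pos by (auto simp: block_start_def)
  then have "continuous_on {block_start n..block_end n} (\<lambda>t. \<Sum>j\<in>{1..d}. c j * W t \<omega> j)"
    by (intro continuous_intros continuous_on_subset[OF W_continuous[OF \<omega>]]) auto
  then show ?thesis
    unfolding block_sum_eq_stieltjes_sum[OF n1]
    by (intro dyadic_stieltjes_sum_tendsto block_start_less_end g' g)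
qed

lemma block_riemann_sum_tendsto:
  assumes n: "1 \<le> n" and F: "continuous_on {block_start n..block_end n} F"
  shows "(\<lambda>k. \<Sum>p\<in>block k n. T / (real Mn * 2 ^ k) * F (node k p))
    \<longlonglongrightarrow> integral {block_start n..block_end n} F"
proof -
  have "T / (real Mn * 2 ^ k) = (block_end n - block_start n) / 2 ^ k" for k :: nat
    using Mn_pos by (simp add: block_start_def block_end_def field_simps)
  then show ?thesis
    unfolding sum_block_shift[OF n] node_in_block[OF n]
    using dyadic_riemann_sum_tendsto[OF block_start_less_end F] by simp
qed


lemma block_subset_horizon:
  assumes "n \<in> {1..Mn}"
  shows "{block_start n..block_end n} \<subseteq> {0..T}"
proof -
  have "0 \<le> block_start n"
    using assms T_pos unfolding block_start_def by auto
  moreover have "real n * T \<le> real Mn * T"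
    using assms T_pos by (intro mult_right_mono) auto
  then have "block_end n \<le> T"
    using Mn_pos by (simp add: block_end_def divide_le_eq mult.commute)
  ultimately show ?thesis
    by auto
qed

lemma indep_vars_block_limits:
  assumes X: "\<And>n \<omega> i. n \<in> {1..Mn} \<Longrightarrow> \<omega> \<in> space P \<Longrightarrow> i \<in> I \<Longrightarrow>
      (\<lambda>k. block_sum (g i) (c i) k n \<omega>) \<longlonglongrightarrow> X n \<omega> i"
  shows "indep_vars (\<lambda>_. PiM I (\<lambda>_. borel)) (\<lambda>n \<omega>. restrict (X n \<omega>) I) {1..Mn}"
proof (rule indep_vars_measurable_sigma[OF indep_sets_sigma_dyadic_block_events dyadic_block_events_subset])
  fix n
  assume n: "n \<in> {1..Mn}"
  have "dyadic_block_events n \<subseteq> Pow (space P)"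
    using dyadic_block_events_subset sets.sets_into_space by blast
  then have "space (sigma (space P) (dyadic_block_events n)) = space P"
    by (rule space_measure_of)
  then have "(\<lambda>\<omega>. X n \<omega> i) \<in> borel_measurable (sigma (space P) (dyadic_block_events n))"
    if "i \<in> I" for i
    using X[OF n _ that]
    by (intro borel_measurable_LIMSEQ_real[OF _ block_sum_measurable_dyadic_block_events]) auto
  then show "(\<lambda>\<omega>. restrict (X n \<omega>) I)
      \<in> measurable (sigma (space P) (dyadic_block_events n)) (PiM I (\<lambda>_. borel))"
    by (intro measurable_restrict)
qed

lemma gaussian_vec_block_limit:
  assumes n: "n \<in> {1..Mn}"
    and g: "\<And>i. i \<in> I \<Longrightarrow> continuous_on {0..T} (g i)"
    and Y: "\<And>\<omega> i. \<omega> \<in> space P \<Longrightarrow> i \<in> I \<Longrightarrow> (\<lambda>k. block_sum (g i) (c i) k n \<omega>) \<longlonglongrightarrow> Y \<omega> i"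
  shows "gaussian_vec P I Y (\<lambda>_. 0) (\<lambda>i i'. (\<Sum>j\<in>{1..d}. c i j * c i' j)
      * integral {block_start n..block_end n} (\<lambda>s. g i s * g i' s))"
proof (rule gaussian_vec_LIMSEQ[OF gaussian_vec_block_sum])
  show "n \<le> Mn"
    using n by simp
  show "(\<lambda>k. block_sum (g i) (c i) k n \<omega>) \<longlonglongrightarrow> Y \<omega> i" if "\<omega> \<in> space P" "i \<in> I" for \<omega> i
    using Y[OF that] .
  fix i i'
  assume "i \<in> I" "i' \<in> I"
  then have "continuous_on {block_start n..block_end n} (\<lambda>s. g i s * g i' s)"
    using block_subset_horizon[OF n] by (intro continuous_intros continuous_on_subset[OF g]) auto
  from block_riemann_sum_tendsto[OF _ this]
  show "(\<lambda>k. (\<Sum>j\<in>{1..d}. c i j * c i' j)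
      * (\<Sum>p\<in>block k n. T / (real Mn * 2 ^ k) * g i (node k p) * g i' (node k p)))
    \<longlonglongrightarrow> (\<Sum>j\<in>{1..d}. c i j * c i' j) * integral {block_start n..block_end n} (\<lambda>s. g i s * g i' s)"
    using n by (auto simp: mult.assoc intro: tendsto_mult_left)
qed

lemma block_sum_integrating_factor_tendsto:
  assumes n: "n \<in> {1..Mn}" and \<omega>: "\<omega> \<in> space P" and Tm: "T < Tm"
    and Zp: "continuous_on {0..T} Zp"
    and eq: "\<forall>t\<in>{0..T}. Zp t = Zp 0 + integral {0..t} (\<lambda>s. m - \<kappa> / (Tm - s) * Zp s)
                              + (\<Sum>j\<in>{1..d}. c j * W t \<omega> j)"
  shows "(\<lambda>k. block_sum (integrating_factor Tm \<kappa>) c k n \<omega>) \<longlonglongrightarrow>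
     integrating_factor Tm \<kappa> (block_end n) * Zp (block_end n)
     - integrating_factor Tm \<kappa> (block_start n) * Zp (block_start n)
     - integrating_factor_integral Tm \<kappa> (block_start n) (block_end n) * m"
proof -
  have block: "0 \<le> block_start n" "block_start n \<le> block_end n" "block_end n \<le> T"
    using block_subset_horizon[OF n] block_start_less_end[of n] by auto
  have Tm_pos: "0 < Tm"
    using T_pos Tm by linarith
  have "(\<lambda>k. block_sum (integrating_factor Tm \<kappa>) c k n \<omega>) \<longlonglongrightarrow>
     integrating_factor Tm \<kappa> (block_end n) * (\<Sum>j\<in>{1..d}. c j * W (block_end n) \<omega> j)
     - integrating_factor Tm \<kappa> (block_start n) * (\<Sum>j\<in>{1..d}. c j * W (block_start n) \<omega> j)
     - integral {block_start n..block_end n}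
         (\<lambda>t. \<kappa> / (Tm - t) * integrating_factor Tm \<kappa> t * (\<Sum>j\<in>{1..d}. c j * W t \<omega> j))"
  proof (rule block_sum_tendsto[OF n \<omega>])
    show "continuous_on {block_start n..block_end n} (\<lambda>t. \<kappa> / (Tm - t) * integrating_factor Tm \<kappa> t)"
      using block Tm Tm_pos by (intro continuous_intros continuous_on_integrating_factor) auto
    show "(integrating_factor Tm \<kappa> has_real_derivative \<kappa> / (Tm - x) * integrating_factor Tm \<kappa> x) (at x)"
      if "x \<in> {block_start n..block_end n}" for x
      using that block Tm Tm_pos by (intro has_real_derivative_integrating_factor) auto
  qed
  then show ?thesis
    using integrating_factor_identity[OF block Tm Zp eq] by simp
qed

end

section \<open>The discretised model\<close>

lemma epsZ_eq_integrating_factor: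
  "epsZ T M Tm k m Z n \<omega> i =
     integrating_factor (Tm i) (k i) (real n * T / real M) * Z (real n * T / real M) \<omega> i
     - integrating_factor (Tm i) (k i) ((real n - 1) * T / real M) * Z ((real n - 1) * T / real M) \<omega> i
     - integrating_factor_integral (Tm i) (k i) ((real n - 1) * T / real M) (real n * T / real M) * m i"
  unfolding epsZ_def phi_def integrating_factor_def integrating_factor_integral_def by (rule refl)

lemma covc_eq_integrating_factor:
  "covc T M Tm k \<beta> n i j = \<beta> i j * integral {(real n - 1) * T / real M..real n * T / real M}
     (\<lambda>s. integrating_factor (Tm i) (k i) s * integrating_factor (Tm j) (k j) s)"
  unfolding covc_def integrating_factor_def by (rule refl)

lemma (in dyadic_brownian) block_sum_tendsto_epsZ:
  assumes "n \<in> {1..Mn}" "\<omega> \<in> space P" "T < Tm i" "continuous_on {0..T} (\<lambda>t. Z t \<omega> i)"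
    and "\<forall>t\<in>{0..T}. Z t \<omega> i = Z 0 \<omega> i + integral {0..t} (\<lambda>s. m i - \<kappa> i / (Tm i - s) * Z s \<omega> i)
           + (\<Sum>j\<in>{1..d}. c j * W t \<omega> j)"
  shows "(\<lambda>k. block_sum (integrating_factor (Tm i) (\<kappa> i)) c k n \<omega>) \<longlonglongrightarrow> epsZ T Mn Tm \<kappa> m Z n \<omega> i"
  using block_sum_integrating_factor_tendsto[OF assms]
  unfolding epsZ_eq_integrating_factor block_start_def block_end_def .

theorem proposition1:
  fixes P :: "'a measure"
    and N M :: nat
    and r T :: real
    and Tm muF muS etaF etaS :: "nat \<Rightarrow> real"
    and St :: "nat \<Rightarrow> nat \<Rightarrow> real"
    and W Z :: "real \<Rightarrow> 'a \<Rightarrow> nat \<Rightarrow> real"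
  assumes "prob_space P"
    and "N \<ge> 1" and "r \<ge> 0" and "T > 0"
    and "\<forall>i\<in>{1..N}. T < Tm i"
    and "\<forall>i\<in>{1..2*N}. \<forall>j\<in>{1..2*N}. i < j \<longrightarrow> St i j = 0"
    and "\<forall>x::nat \<Rightarrow> real. (\<exists>i\<in>{1..2*N}. x i \<noteq> 0) \<longrightarrow>
           (\<Sum>i=1..2*N. \<Sum>j=1..2*N. x i * Sigma N St i j * x j) > 0"
    and "\<forall>i\<in>{1..N}. etaF i < etaS i"
    and "std_brownian P (2*N) W"
    and "\<forall>\<omega>\<in>space P. \<forall>i\<in>{1..N}. continuous_on {0..T} (\<lambda>t. Z t \<omega> i) \<and>
           (\<forall>t\<in>{0..T}. Z t \<omega> i = Z 0 \<omega> i
              + integral {0..t} (\<lambda>s. drift_m N r St muF muS i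
                                    - kappa etaF etaS i / (Tm i - s) * Z s \<omega> i)
              + (\<Sum>j=1..2*N. SigmaZt N St i j * W t \<omega> j))"
    and "M \<ge> 1"
  shows "prob_space.indep_vars P (\<lambda>_. PiM {1..N} (\<lambda>_. borel))
           (\<lambda>n \<omega>. restrict (epsZ T M Tm (kappa etaF etaS) (drift_m N r St muF muS) Z n \<omega>) {1..N})
           {1..M}
       \<and> (\<forall>n\<in>{1..M}.
            gaussian_vec P {1..N} (epsZ T M Tm (kappa etaF etaS) (drift_m N r St muF muS) Z n)
              (\<lambda>_. 0) (covc T M Tm (kappa etaF etaS) (betaZ N St) n))"
proof -
  interpret dyadic_brownian P "2 * N" W T M
    by (intro dyadic_brownian.intro dyadic_brownian_axioms.intro assms(1,4,9,11))
  let ?\<kappa> = "kappa etaF etaS" and ?m = "drift_m N r St muF muS"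
  let ?g = "\<lambda>i. integrating_factor (Tm i) (?\<kappa> i)" and ?c = "SigmaZt N St"
  have lim: "(\<lambda>k. block_sum (?g i) (?c i) k n \<omega>) \<longlonglongrightarrow> epsZ T M Tm ?\<kappa> ?m Z n \<omega> i"
    if "n \<in> {1..M}" "\<omega> \<in> space P" "i \<in> {1..N}" for n \<omega> i
    by (intro block_sum_tendsto_epsZ) (use that assms(5,10) in blast)+
  have cont: "continuous_on {0..T} (?g i)" if "i \<in> {1..N}" for i
    using assms(4) bspec[OF assms(5) that] by (intro continuous_on_integrating_factor) auto
  have "gaussian_vec P {1..N} (epsZ T M Tm ?\<kappa> ?m Z n) (\<lambda>_. 0) (covc T M Tm ?\<kappa> (betaZ N St) n)"
    if n: "n \<in> {1..M}" for n
  proof -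
    have "gaussian_vec P {1..N} (epsZ T M Tm ?\<kappa> ?m Z n) (\<lambda>_. 0)
        (\<lambda>i i'. (\<Sum>j\<in>{1..2 * N}. ?c i j * ?c i' j)
           * integral {block_start n..block_end n} (\<lambda>s. ?g i s * ?g i' s))"
      by (intro gaussian_vec_block_limit) (use n lim cont in auto)
    moreover have "(\<lambda>i i'. (\<Sum>j\<in>{1..2 * N}. ?c i j * ?c i' j)
        * integral {block_start n..block_end n} (\<lambda>s. ?g i s * ?g i' s)) = covc T M Tm ?\<kappa> (betaZ N St) n"
      unfolding covc_eq_integrating_factor betaZ_def block_start_def block_end_def by simp
    ultimately show ?thesis
      by (simp only:)
  qed
  moreover have "indep_vars (\<lambda>_. PiM {1..N} (\<lambda>_. borel))
      (\<lambda>n \<omega>. restrict (epsZ T M Tm ?\<kappa> ?m Z n \<omega>) {1..N}) {1..M}"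
    using lim by (rule indep_vars_block_limits)
  ultimately show ?thesis
    by blast
qed

end
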